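(* For every $n\ge 2$, $C(2w_n)=C(2v_{n+1})$, where $w_n=x_1\cdots x_n(x_1^2+1)$ and $v_{n+1}=x_1\cdots x_{n+1}(x_1+x_2)$.
   Context: All operations are on $\mathbb{Z}_8$. For an operation $f$, $C(f)$ denotes the clone generated by $f$ together with binary addition and all unary constant operations. *)

theory Defs
  imports Main "HOL-Library.Numeral_Type"
begin

text \<open>A k-ary operation is
a pair (k, h) with h :: (nat => 8) => 8 meant to depend only on the arguments
x 0, ..., x (k-1).\<close>

type_synonym op8 = "nat \<times> ((nat \<Rightarrow> 8) \<Rightarrow> 8)"

inductive_set gen_clone :: "op8 set \<Rightarrow> op8 set" for F :: "op8 set" where
  proj: "i < k \<Longrightarrow> (k, \<lambda>x. x i) \<in> gen_clone F"
| comp: "(m, f) \<in> F \<Longrightarrow> (\<forall>j<m. (k, g j) \<in> gen_clone F)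
          \<Longrightarrow> (k, \<lambda>x. f (\<lambda>j. if j < m then g j x else 0)) \<in> gen_clone F"

definition add_op :: op8 where
  "add_op = (2, \<lambda>x. x 0 + x 1)"

definition const_ops :: "op8 set" where
  "const_ops = {(1, \<lambda>x. c) | c. True}"

definition C :: "op8 \<Rightarrow> op8 set" where
  "C f = gen_clone (insert f (insert add_op const_ops))"

text \<open>w_n = x_1 ... x_n (x_1^2 + 1), n-ary (variables indexed from 0).\<close>
definition w :: "nat \<Rightarrow> (nat \<Rightarrow> 8) \<Rightarrow> 8" where
  "w n = (\<lambda>x. (\<Prod>i<n. x i) * (x 0 ^ 2 + 1))"

definition v :: "nat \<Rightarrow> (nat \<Rightarrow> 8) \<Rightarrow> 8" where
  "v m = (\<lambda>x. (\<Prod>i<m. x i) * (x 0 + x 1))"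

end

theory Submission
  imports Defs
begin

text \<open>Both clones contain addition and all constants, so it suffices to write each generator
as a sum of substitution instances of the other one. Since multiplication by 2 only sees its
cofactor modulo 4, this reduces to two polynomial identities over \<open>\<int>\<^sub>8\<close> in the
first two or three variables, the remaining variables entering only as a common product.\<close>

lemma gen_clone_comp_closed:
  assumes "(m, f) \<in> gen_clone F" "\<forall>j<m. (k, g j) \<in> gen_clone F"
  shows "(k, \<lambda>x. f (\<lambda>j. if j < m then g j x else 0)) \<in> gen_clone F"
  using assms
proof (induct m f arbitrary: g rule: gen_clone.induct)
  case (proj i m)
  then show ?case by simp
next
  case (comp m0 f0 m h)
  have "(k, \<lambda>x. f0 (\<lambda>j. if j < m0 then (\<lambda>x. h j (\<lambda>j'. if j' < m then g j' x else 0)) x else 0))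
          \<in> gen_clone F"
    using comp by (intro gen_clone.comp) blast+
  then show ?case by simp
qed

lemma gen_clone_subset:
  assumes "F \<subseteq> gen_clone G"
  shows "gen_clone F \<subseteq> gen_clone G"
proof clarify
  fix k f assume "(k, f) \<in> gen_clone F"
  then show "(k, f) \<in> gen_clone G"
  proof (induct rule: gen_clone.induct)
    case (proj i k)
    then show ?case by (rule gen_clone.proj)
  next
    case (comp m f k g)
    then show ?case using assms by (intro gen_clone_comp_closed) auto
  qed
qed

text \<open>A generator receives its arguments padded with zeros beyond its arity, so it can be
applied to an arbitrary tuple only if it ignores those positions.\<close>

lemma gen_clone_compI:
  assumes "(m, f) \<in> F" "\<And>x. f (\<lambda>j. if j < m then x j else 0) = f x"
    and "\<forall>j<m. (k, \<lambda>x. Y x j) \<in> gen_clone F"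
  shows "(k, \<lambda>x. f (Y x)) \<in> gen_clone F"
proof -
  have "(k, \<lambda>x. f (\<lambda>j. if j < m then (\<lambda>x. Y x j) x else 0)) \<in> gen_clone F"
    using assms(1,3) by (rule gen_clone.comp)
  then show ?thesis by (simp add: assms(2))
qed

lemma gen_clone_generator:
  assumes "(m, f) \<in> F" "\<And>x. f (\<lambda>j. if j < m then x j else 0) = f x"
  shows "(m, f) \<in> gen_clone F"
  using gen_clone_compI[OF assms, of m "\<lambda>x. x"] by (simp add: gen_clone.proj)

lemma gen_clone_comp_prefixI:
  assumes "(length hs + r, f) \<in> F"
    and "\<And>x. f (\<lambda>j. if j < length hs + r then x j else 0) = f x"
    and "\<forall>h\<in>set hs. (k, h) \<in> gen_clone F" and "s + r \<le> k"
  shows "(k, \<lambda>x. f (\<lambda>j. if j < length hs then (hs ! j) x else x (j - length hs + s)))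
           \<in> gen_clone F"
  using assms(1,2)
proof (rule gen_clone_compI, intro allI impI)
  fix j assume "j < length hs + r"
  then show "(k, \<lambda>x. if j < length hs then (hs ! j) x else x (j - length hs + s)) \<in> gen_clone F"
    using assms(3,4) by (cases "j < length hs") (auto intro: gen_clone.proj)
qed

lemma gen_clone_add:
  assumes "add_op \<in> F" "(k, f) \<in> gen_clone F" "(k, g) \<in> gen_clone F"
  shows "(k, \<lambda>x. f x + g x) \<in> gen_clone F"
proof -
  have "(k, \<lambda>x. (\<lambda>y. y 0 + y 1) (\<lambda>j::nat. if j = 0 then f x else g x)) \<in> gen_clone F"
    using assms by (intro gen_clone_compI[of 2]) (auto simp: add_op_def less_2_cases_iff)
  then show ?thesis by simp
qed

lemma gen_clone_const:
  assumes "(1, \<lambda>x. c) \<in> F" "0 < k"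
  shows "(k, \<lambda>x. c) \<in> gen_clone F"
  using gen_clone_compI[OF assms(1), of k "\<lambda>x. x"] assms(2) by (simp add: gen_clone.proj)

lemma base_ops_in_gen_clone:
  assumes "p \<in> insert add_op const_ops"
  shows "p \<in> gen_clone (insert f (insert add_op const_ops))"
  using assms by (auto simp: add_op_def const_ops_def intro!: gen_clone_generator)

lemma C_eqI:
  assumes "f \<in> C g" "g \<in> C f"
  shows "C f = C g"
  using assms base_ops_in_gen_clone
    gen_clone_subset[of "insert f (insert add_op const_ops)" "insert g (insert add_op const_ops)"]
    gen_clone_subset[of "insert g (insert add_op const_ops)" "insert f (insert add_op const_ops)"]
  unfolding C_def by blast

lemma C_add:
  assumes "(k, f) \<in> C h" "(k, g) \<in> C h"
  shows "(k, \<lambda>x. f x + g x) \<in> C h"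
  using assms unfolding C_def by (intro gen_clone_add) auto

lemma C_const: "0 < k \<Longrightarrow> (k, \<lambda>x. c) \<in> C h"
  unfolding C_def by (rule gen_clone_const) (auto simp: const_ops_def)

lemma C_proj: "i < k \<Longrightarrow> (k, \<lambda>x. x i) \<in> C h"
  unfolding C_def by (rule gen_clone.proj)

lemma C_comp_prefixI:
  assumes "length hs + r = m" "\<And>x. f (\<lambda>j. if j < m then x j else 0) = f x"
    and "\<forall>h\<in>set hs. (k, h) \<in> C (m, f)" and "s + r \<le> k"
  shows "(k, \<lambda>x. f (\<lambda>j. if j < length hs then (hs ! j) x else x (j - length hs + s)))
           \<in> C (m, f)"
  using assms unfolding C_def by (intro gen_clone_comp_prefixI) auto

lemma w_restrict_args: "0 < n \<Longrightarrow> w n (\<lambda>j. if j < n then x j else 0) = w n x"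
  unfolding w_def by (auto intro!: prod.cong)

lemma v_restrict_args: "1 < m \<Longrightarrow> v m (\<lambda>j. if j < m then x j else 0) = v m x"
  unfolding v_def by (auto intro!: prod.cong)

lemma w_split: "w (r + 2) x = x 0 * x 1 * (x 0 ^ 2 + 1) * (\<Prod>i<r. x (i + 2))"
  unfolding w_def
  by (simp add: prod.lessThan_Suc_shift numeral_2_eq_2 algebra_simps del: prod.lessThan_Suc)

lemma v_split: "v (r + 3) x = x 0 * x 1 * x 2 * (x 0 + x 1) * (\<Prod>i<r. x (i + 3))"
  unfolding v_def
  by (simp add: prod.lessThan_Suc_shift numeral_2_eq_2 numeral_3_eq_3 algebra_simps
      del: prod.lessThan_Suc)

lemma Z8_cases: "(x::8) \<in> {0, 1, 2, 3, 4, 5, 6, 7}"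
proof (induct x rule: bit0.induct)
  case (1 z)
  then have "z = 0 \<or> z = 1 \<or> z = 2 \<or> z = 3 \<or> z = 4 \<or> z = 5 \<or> z = 6 \<or> z = 7" by auto
  then show ?case by auto
qed

lemma w_head_as_v_heads:
  fixes a b :: 8
  shows "2 * a * b * (a ^ 2 + 1) =
    2 * b * (a + b) * (1 + a) * (b + (a + b)) + 2 * b * 1 * 1 * (b + 1) + 2 * b * 7 * 1 * (b + 7)"
  using Z8_cases[of a] Z8_cases[of b] by auto

lemma v_head_as_w_heads:
  fixes a b c :: 8
  shows "2 * a * b * c * (a + b) =
    2 * a * c * (a ^ 2 + 1) + 2 * b * c * (b ^ 2 + 1) + 2 * (a + b) * c * ((a + b) ^ 2 + 1)"
  using Z8_cases[of a] Z8_cases[of b] Z8_cases[of c] by auto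

lemma two_w_in_C_two_v:
  assumes "2 \<le> n"
  shows "(n, \<lambda>x. 2 * w n x) \<in> C (n + 1, \<lambda>x. 2 * v (n + 1) x)"
proof -
  obtain r where n: "n = r + 2" using assms by (metis add.commute le_Suc_ex)
  then have "n + 1 = r + 3" by simp
  let ?f = "\<lambda>x. 2 * v (n + 1) x"
  let ?sub = "\<lambda>hs x. ?f (\<lambda>j. if j < length hs then (hs ! j) x else x (j - length hs + 2))"
  have sub: "(n, ?sub hs) \<in> C (n + 1, ?f)"
    if "length hs = 3" "\<forall>h\<in>set hs. (n, h) \<in> C (n + 1, ?f)" for hs
    using that n by (intro C_comp_prefixI[where r = r]) (auto simp: v_restrict_args)
  define hs1 hs2 hs3 :: "((nat \<Rightarrow> 8) \<Rightarrow> 8) list"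
    where "hs1 = [\<lambda>x. x 1, \<lambda>x. x 0 + x 1, \<lambda>x. 1 + x 0]"
      and "hs2 = [\<lambda>x. x 1, \<lambda>x. 1, \<lambda>x. 1]"
      and "hs3 = [\<lambda>x. x 1, \<lambda>x. 7, \<lambda>x. 1]"
  have len: "length hs1 = 3" "length hs2 = 3" "length hs3 = 3"
    by (simp_all add: hs1_def hs2_def hs3_def)
  have "(n, \<lambda>x. ?sub hs1 x + ?sub hs2 x + ?sub hs3 x) \<in> C (n + 1, ?f)"
    using n by (intro C_add sub) (auto simp: hs1_def hs2_def hs3_def intro!: C_add C_proj C_const)
  moreover have "?sub hs1 x + ?sub hs2 x + ?sub hs3 x = 2 * w n x" for x
  proof -
    let ?P = "\<Prod>i<r. x (i + 2)"
    have v_sub: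
      "?sub hs x = 2 * ((hs ! 0) x * (hs ! 1) x * (hs ! 2) x * ((hs ! 0) x + (hs ! 1) x)) * ?P"
      if "length hs = 3" for hs
      unfolding \<open>n + 1 = r + 3\<close> v_split using that by (simp add: algebra_simps)
    have "2 * w n x = 2 * x 0 * x 1 * (x 0 ^ 2 + 1) * ?P"
      unfolding n w_split by (simp add: algebra_simps)
    also have "\<dots> = ?sub hs1 x + ?sub hs2 x + ?sub hs3 x"
      unfolding w_head_as_v_heads v_sub[OF len(1)] v_sub[OF len(2)] v_sub[OF len(3)]
      by (simp add: hs1_def hs2_def hs3_def algebra_simps)
    finally show ?thesis by simp
  qed
  ultimately show ?thesis by simp
qed

lemma two_v_in_C_two_w:
  assumes "2 \<le> n"
  shows "(n + 1, \<lambda>x. 2 * v (n + 1) x) \<in> C (n, \<lambda>x. 2 * w n x)"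
proof -
  obtain r where n: "n = r + 2" using assms by (metis add.commute le_Suc_ex)
  then have "n + 1 = r + 3" by simp
  let ?f = "\<lambda>x. 2 * w n x"
  let ?sub = "\<lambda>hs x. ?f (\<lambda>j. if j < length hs then (hs ! j) x else x (j - length hs + 3))"
  have sub: "(n + 1, ?sub hs) \<in> C (n, ?f)"
    if "length hs = 2" "\<forall>h\<in>set hs. (n + 1, h) \<in> C (n, ?f)" for hs
    using that n by (intro C_comp_prefixI[where r = r]) (auto simp: w_restrict_args)
  define hs1 hs2 hs3 :: "((nat \<Rightarrow> 8) \<Rightarrow> 8) list"
    where "hs1 = [\<lambda>x. x 0, \<lambda>x. x 2]"
      and "hs2 = [\<lambda>x. x 1, \<lambda>x. x 2]"
      and "hs3 = [\<lambda>x. x 0 + x 1, \<lambda>x. x 2]"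
  have len: "length hs1 = 2" "length hs2 = 2" "length hs3 = 2"
    by (simp_all add: hs1_def hs2_def hs3_def)
  have "(n + 1, \<lambda>x. ?sub hs1 x + ?sub hs2 x + ?sub hs3 x) \<in> C (n, ?f)"
    using n by (intro C_add sub) (auto simp: hs1_def hs2_def hs3_def intro!: C_add C_proj)
  moreover have "?sub hs1 x + ?sub hs2 x + ?sub hs3 x = 2 * v (n + 1) x" for x
  proof -
    let ?P = "\<Prod>i<r. x (i + 3)"
    have w_sub: "?sub hs x = 2 * ((hs ! 0) x * (hs ! 1) x * ((hs ! 0) x ^ 2 + 1)) * ?P"
      if "length hs = 2" for hs
      unfolding n w_split using that by (simp add: algebra_simps)
    have "2 * v (n + 1) x = 2 * x 0 * x 1 * x 2 * (x 0 + x 1) * ?P"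
      unfolding \<open>n + 1 = r + 3\<close> v_split by (simp add: algebra_simps)
    also have "\<dots> = ?sub hs1 x + ?sub hs2 x + ?sub hs3 x"
      unfolding v_head_as_w_heads w_sub[OF len(1)] w_sub[OF len(2)] w_sub[OF len(3)]
      by (simp add: hs1_def hs2_def hs3_def algebra_simps)
    finally show ?thesis by simp
  qed
  ultimately show ?thesis by simp
qed

theorem lemma4p5:
  fixes n :: nat
  assumes "n \<ge> 2"
  shows "C (n, \<lambda>x. 2 * w n x) = C (n + 1, \<lambda>x. 2 * v (n + 1) x)"
  using two_w_in_C_two_v[OF assms] two_v_in_C_two_w[OF assms] by (rule C_eqI)

end
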